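(* Let $\mathbf{P}=(p_{i,j})_{i,j=0}^{d}$, $d\ge 1$, be the transition matrix of an ergodic (irreducible and aperiodic) discrete-time Markov chain on the finite state space $\{0,1,\dots,d\}$ whose eigenvalues are all simple, and let $\boldsymbol{\pi}=(\pi_0,\dots,\pi_d)$ be its stationary distribution. Let $Y_1,Y_2,\dots,Y_{W+1}$ ($W\ge 1$) be the chain started in stationarity ($Y_1\sim\boldsymbol{\pi}$), and for states $i,j$ let $N_{i,j}=\sum_{t=1}^{W}\mathbf{1}_{\{Y_t=i,\,Y_{t+1}=j\}}$. Write $\mathbf{P}=\mathbf{U}\,\mathrm{diag}(\lambda_0,\dots,\lambda_d)\,\mathbf{U}^{-1}$, where $\lambda_0=1$, the columns of $\mathbf{U}=(u_{jr})$ are right eigenvectors, $v_{ri}$ denotes the $(r,i)$ entry of $\mathbf{U}^{-1}$, and the non-unit eigenvalues are indexed so that $|1-\lambda_1|\le|1-\lambda_r|$ for all $r=1,\dots,d$. Define $c_{j,i}=\sum_{r=1}^{d}|u_{jr}v_{ri}|$. Then for all states $i,j$: $$\mathrm{Var}\!\left[\frac{N_{i,j}}{W}\right]\le \pi_i p_{i,j}\left(\frac{1-\pi_i p_{i,j}}{W}+2p_{i,j}c_{j,i}\frac{2+W|1-\lambda_1|}{W^2|1-\lambda_1|^2}\right),$$ and for all states $i$ and $j\neq j'$: $$\mathrm{Cov}\!\left[\frac{N_{i,j}}{W},\frac{N_{i,j'}}{W}\right]\le \pi_i p_{i,j}p_{i,j'}\left(-\frac{\pi_i}{W}+(c_{j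,i}+c_{j',i})\frac{2+W|1-\lambda_1|}{W^2|1-\lambda_1|^2}\right).$$
   Context: Here $\mathbf{1}_{\{\cdot\}}$ is the indicator function. The quantities $c_{j,i}$ do not depend on the scaling chosen for the eigenvectors. *)

theory Defs
  imports Complex_Main "Jordan_Normal_Form.Matrix" "HOL-Library.FuncSet"
begin

definition stochastic_mat :: "nat \<Rightarrow> real mat \<Rightarrow> bool" where
  "stochastic_mat d P \<longleftrightarrow> P \<in> carrier_mat (d+1) (d+1) \<and>
     (\<forall>i\<le>d. \<forall>j\<le>d. P $$ (i,j) \<ge> 0) \<and>
     (\<forall>i\<le>d. (\<Sum>j\<le>d. P $$ (i,j)) = 1)"

definition irreducible_mc :: "nat \<Rightarrow> real mat \<Rightarrow> bool" where
  "irreducible_mc d P \<longleftrightarrow> (\<forall>i\<le>d. \<forall>j\<le>d. \<exists>n. (P ^\<^sub>m n) $$ (i,j) > 0)"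

definition aperiodic_mc :: "nat \<Rightarrow> real mat \<Rightarrow> bool" where
  "aperiodic_mc d P \<longleftrightarrow> (\<forall>i\<le>d. Gcd {n::nat. n \<ge> 1 \<and> (P ^\<^sub>m n) $$ (i,i) > 0} = 1)"

definition ergodic_mc :: "nat \<Rightarrow> real mat \<Rightarrow> bool" where
  "ergodic_mc d P \<longleftrightarrow> stochastic_mat d P \<and> irreducible_mc d P \<and> aperiodic_mc d P"

definition stationary_dist :: "nat \<Rightarrow> real mat \<Rightarrow> (nat \<Rightarrow> real) \<Rightarrow> bool" where
  "stationary_dist d P \<pi> \<longleftrightarrow> (\<forall>i\<le>d. \<pi> i \<ge> 0) \<and> (\<Sum>i\<le>d. \<pi> i) = 1 \<and>
     (\<forall>j\<le>d. (\<Sum>i\<le>d. \<pi> i * P $$ (i,j)) = \<pi> j)"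

text \<open>Sample paths (Y_1,...,Y_{W+1}) are represented as y 0, ..., y W.\<close>
definition paths :: "nat \<Rightarrow> nat \<Rightarrow> (nat \<Rightarrow> nat) set" where
  "paths d W = {0..W} \<rightarrow>\<^sub>E {0..d}"

definition path_prob :: "real mat \<Rightarrow> (nat \<Rightarrow> real) \<Rightarrow> nat \<Rightarrow> (nat \<Rightarrow> nat) \<Rightarrow> real" where
  "path_prob P \<pi> W y = \<pi> (y 0) * (\<Prod>t<W. P $$ (y t, y (Suc t)))"

definition mc_expect :: "nat \<Rightarrow> real mat \<Rightarrow> (nat \<Rightarrow> real) \<Rightarrow> nat \<Rightarrow> ((nat \<Rightarrow> nat) \<Rightarrow> real) \<Rightarrow> real" where
  "mc_expect d P \<pi> W f = (\<Sum>y\<in>paths d W. path_prob P \<pi> W y * f y)"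

definition mc_cov :: "nat \<Rightarrow> real mat \<Rightarrow> (nat \<Rightarrow> real) \<Rightarrow> nat \<Rightarrow> ((nat \<Rightarrow> nat) \<Rightarrow> real) \<Rightarrow> ((nat \<Rightarrow> nat) \<Rightarrow> real) \<Rightarrow> real" where
  "mc_cov d P \<pi> W f g = mc_expect d P \<pi> W (\<lambda>y. f y * g y) - mc_expect d P \<pi> W f * mc_expect d P \<pi> W g"

definition mc_var :: "nat \<Rightarrow> real mat \<Rightarrow> (nat \<Rightarrow> real) \<Rightarrow> nat \<Rightarrow> ((nat \<Rightarrow> nat) \<Rightarrow> real) \<Rightarrow> real" where
  "mc_var d P \<pi> W f = mc_cov d P \<pi> W f f"

definition trans_count :: "nat \<Rightarrow> nat \<Rightarrow> nat \<Rightarrow> (nat \<Rightarrow> nat) \<Rightarrow> real" where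
  "trans_count W i j y = (\<Sum>t<W. if y t = i \<and> y (Suc t) = j then 1 else 0)"

definition diag_cmat :: "nat \<Rightarrow> (nat \<Rightarrow> complex) \<Rightarrow> complex mat" where
  "diag_cmat n ev = mat n n (\<lambda>(i,j). if i = j then ev i else 0)"

end

theory Submission
  imports Defs
begin

text \<open>Write \<open>N_ij\<close> as the sum of the indicators of a transition \<open>i \<rightarrow> j\<close> at the times
  \<open>t < W\<close>. By the Markov property and stationarity, the indicators at times \<open>s < t\<close> have
  joint mean \<open>\<pi>_i p_ij (P^(t-s-1))_ji p_ij'\<close>, so the covariance of \<open>N_ij\<close> and \<open>N_ij'\<close> is
  \<open>W\<close> times the one-step covariance plus \<open>\<pi>_i p_ij p_ij'\<close> times the sums of
  \<open>(P^m)_ji - \<pi>_i\<close> over \<open>0 \<le> m < t < W\<close>. In the spectral decomposition the eigenvalue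
  \<open>1\<close> contributes exactly \<open>\<pi>_i\<close>, so \<open>(P^m)_ji - \<pi>_i = \<Sum>_(r\<ge>1) u_jr v_ri \<lambda>_r^m\<close>, and for
  \<open>|\<lambda>| \<le> 1\<close>, \<open>\<lambda> \<noteq> 1\<close> the double geometric sum \<open>\<Sum>_(t<W) \<Sum>_(m<t) \<lambda>^m\<close> has modulus at most
  \<open>2/|1-\<lambda>|^2 + W/|1-\<lambda>|\<close>, which decreases in \<open>|1-\<lambda>|\<close>.\<close>

lemma sum_PiE_insert:
  assumes "x \<notin> S"
  shows "(\<Sum>y\<in>Pi\<^sub>E (insert x S) T. F y) = (\<Sum>b\<in>T x. \<Sum>y\<in>Pi\<^sub>E S T. F (y(x := b)))"
proof -
  have "(\<Sum>y\<in>Pi\<^sub>E (insert x S) T. F y)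
      = (\<Sum>p\<in>T x \<times> Pi\<^sub>E S T. F ((\<lambda>(b, y). y(x := b)) p))"
    unfolding PiE_insert_eq by (rule sum.reindex[OF inj_combinator[OF assms], unfolded comp_def])
  then show ?thesis
    by (simp add: sum.cartesian_product case_prod_beta)
qed

fun forward_weight ::
  "nat \<Rightarrow> (nat \<Rightarrow> real) \<Rightarrow> (nat \<Rightarrow> nat \<Rightarrow> nat \<Rightarrow> real) \<Rightarrow> nat \<Rightarrow> nat \<Rightarrow> real" where
  "forward_weight d w M 0 b = w b"
| "forward_weight d w M (Suc n) b = (\<Sum>a\<le>d. forward_weight d w M n a * M n a b)"

lemma sum_paths_forward_weight:
  "(\<Sum>y\<in>{0..n} \<rightarrow>\<^sub>E {0..d}. w (y 0) * (\<Prod>t<n. M t (y t) (y (Suc t))) * h (y n))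
   = (\<Sum>b\<le>d. forward_weight d w M n b * h b)"
proof (induction n arbitrary: h)
  case 0
  have "{0..0::nat} = insert 0 {}" by auto
  then show ?case
    by (simp add: sum_PiE_insert atLeast0AtMost)
next
  case (Suc n)
  have "{0..Suc n} = insert (Suc n) {0..n}" by auto
  then have "(\<Sum>y\<in>{0..Suc n} \<rightarrow>\<^sub>E {0..d}. w (y 0) * (\<Prod>t<Suc n. M t (y t) (y (Suc t))) * h (y (Suc n)))
     = (\<Sum>b\<in>{0..d}. \<Sum>y\<in>{0..n} \<rightarrow>\<^sub>E {0..d}.
          w (y 0) * (\<Prod>t<n. M t (y t) (y (Suc t))) * (M n (y n) b * h b))"
    by (simp add: sum_PiE_insert algebra_simps)
  also have "\<dots> = (\<Sum>y\<in>{0..n} \<rightarrow>\<^sub>E {0..d}.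
          w (y 0) * (\<Prod>t<n. M t (y t) (y (Suc t))) * (\<Sum>b\<le>d. M n (y n) b * h b))"
    by (subst sum.swap) (simp add: sum_distrib_left atLeast0AtMost)
  also have "\<dots> = (\<Sum>a\<le>d. forward_weight d w M n a * (\<Sum>b\<le>d. M n a b * h b))"
    by (rule Suc.IH)
  also have "\<dots> = (\<Sum>b\<le>d. forward_weight d w M (Suc n) b * h b)"
    by (simp add: sum_distrib_left sum_distrib_right algebra_simps, subst sum.swap, simp)
  finally show ?case .
qed

definition transition_at :: "nat \<Rightarrow> nat \<Rightarrow> nat \<Rightarrow> (nat \<Rightarrow> nat) \<Rightarrow> real" where
  "transition_at t i j y = (if y t = i \<and> y (Suc t) = j then 1 else 0)"

lemma trans_count_eq_sum: "trans_count W i j y = (\<Sum>t<W. transition_at t i j y)"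
  by (simp add: trans_count_def transition_at_def)

lemma mc_expect_sum:
  "mc_expect d P \<pi> W (\<lambda>y. \<Sum>t\<in>T. f t y) = (\<Sum>t\<in>T. mc_expect d P \<pi> W (f t))"
  unfolding mc_expect_def by (simp add: sum_distrib_left, rule sum.swap)

lemma mc_expect_divide: "mc_expect d P \<pi> W (\<lambda>y. f y / c) = mc_expect d P \<pi> W f / c"
  unfolding mc_expect_def by (simp add: sum_divide_distrib)

lemma mc_cov_divide:
  "mc_cov d P \<pi> W (\<lambda>y. f y / c) (\<lambda>y. g y / c) = mc_cov d P \<pi> W f g / c^2"
proof -
  have "mc_expect d P \<pi> W (\<lambda>y. f y / c * (g y / c)) = mc_expect d P \<pi> W (\<lambda>y. f y * g y) / c^2"
    using mc_expect_divide[of d P \<pi> W "\<lambda>y. f y * g y" "c^2"] by (simp add: power2_eq_square)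
  then show ?thesis
    unfolding mc_cov_def mc_expect_divide by (simp add: power2_eq_square diff_divide_distrib)
qed

lemma mc_cov_sum:
  "mc_cov d P \<pi> W (\<lambda>y. \<Sum>s\<in>S. f s y) (\<lambda>y. \<Sum>t\<in>T. g t y)
   = (\<Sum>s\<in>S. \<Sum>t\<in>T. mc_cov d P \<pi> W (f s) (g t))"
  unfolding mc_cov_def sum_product mc_expect_sum
  by (simp add: sum_subtractf sum_product)

lemma mc_expect_prod_eq_forward_weight:
  "mc_expect d P \<pi> W (\<lambda>y. \<Prod>u<W. g u (y u) (y (Suc u)))
   = (\<Sum>b\<le>d. forward_weight d \<pi> (\<lambda>u a b. P $$ (a,b) * g u a b) W b)"
  unfolding mc_expect_def paths_def path_prob_def
  using sum_paths_forward_weight[where w = \<pi> and n = W and d = d and h = "\<lambda>_. 1"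
      and M = "\<lambda>u a b. P $$ (a,b) * g u a b"]
  by (simp add: prod.distrib mult.assoc)

lemma mc_expect_transition_pair:
  assumes "s < W" "t < W"
  shows "mc_expect d P \<pi> W (\<lambda>y. transition_at s i j y * transition_at t i j' y)
    = (\<Sum>b\<le>d. forward_weight d \<pi> (\<lambda>u a b. P $$ (a,b)
         * (if u = s then if a = i \<and> b = j then 1 else 0 else 1)
         * (if u = t then if a = i \<and> b = j' then 1 else 0 else 1)) W b)"
  unfolding mc_expect_prod_eq_forward_weight[symmetric] mult.assoc
  by (simp add: prod.distrib prod.delta assms transition_at_def)

lemma sum_square_by_offset:
  fixes D :: "nat \<Rightarrow> nat \<Rightarrow> 'a::comm_semiring_1"
  assumes "\<And>s t. s < W \<Longrightarrow> t < W \<Longrightarrow>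
    D s t = (if s = t then c else if s < t then A (t - s - 1) else B (s - t - 1))"
  shows "(\<Sum>s<W. \<Sum>t<W. D s t) = of_nat W * c + (\<Sum>t<W. \<Sum>m<t. A m + B m)"
  using assms
proof (induction W)
  case 0
  then show ?case by simp
next
  case (Suc W)
  have "(\<Sum>s<W. D s W) = (\<Sum>s<W. A (W - Suc s))"
    by (rule sum.cong) (use Suc.prems in auto)
  also have "\<dots> = (\<Sum>m<W. A m)" by (rule sum.nat_diff_reindex)
  finally have column: "(\<Sum>s<W. D s W) = (\<Sum>m<W. A m)" .
  have "(\<Sum>t<W. D W t) = (\<Sum>t<W. B (W - Suc t))"
    by (rule sum.cong) (use Suc.prems in auto)
  also have "\<dots> = (\<Sum>m<W. B m)" by (rule sum.nat_diff_reindex)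
  finally have row: "(\<Sum>t<W. D W t) = (\<Sum>m<W. B m)" .
  have "(\<Sum>s<Suc W. \<Sum>t<Suc W. D s t)
      = (\<Sum>s<W. \<Sum>t<W. D s t) + (\<Sum>s<W. D s W) + (\<Sum>t<W. D W t) + D W W"
    by (simp add: sum.distrib add_ac)
  then show ?case
    using Suc column row by (simp add: sum.distrib algebra_simps)
qed

lemma sum_partial_geometric_sums:
  fixes z :: "'a::comm_ring_1"
  shows "(1 - z)^2 * (\<Sum>t<W. \<Sum>m<t. z^m) = of_nat W * (1 - z) - (1 - z^W)"
proof (induction W)
  case 0
  then show ?case by simp
next
  case (Suc W)
  have "(1 - z)^2 * (\<Sum>t<Suc W. \<Sum>m<t. z^m)
      = (1 - z)^2 * (\<Sum>t<W. \<Sum>m<t. z^m) + (1 - z) * ((1 - z) * (\<Sum>m<W. z^m))"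
    by (simp add: distrib_left power2_eq_square mult.assoc)
  also have "\<dots> = of_nat W * (1 - z) - (1 - z^W) + (1 - z) * (1 - z^W)"
    by (simp only: Suc.IH one_diff_power_eq)
  also have "\<dots> = of_nat (Suc W) * (1 - z) - (1 - z^Suc W)"
    by (simp add: algebra_simps)
  finally show ?case .
qed

lemma norm_sum_partial_geometric_sums_le:
  fixes z :: "'a::real_normed_field"
  assumes "norm z \<le> 1" "z \<noteq> 1"
  shows "norm (\<Sum>t<W. \<Sum>m<t. z^m) \<le> 2 / norm (1 - z)^2 + W / norm (1 - z)"
proof -
  define \<delta> where "\<delta> = norm (1 - z)"
  have "0 < \<delta>" using assms(2) unfolding \<delta>_def by simp
  have "\<delta>^2 * norm (\<Sum>t<W. \<Sum>m<t. z^m) = norm (of_nat W * (1 - z) - (1 - z^W))"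
    unfolding \<delta>_def sum_partial_geometric_sums[symmetric] by (simp add: norm_mult norm_power)
  also have "\<dots> \<le> W * \<delta> + (1 + 1)"
    using norm_triangle_ineq4[of "of_nat W * (1 - z)" "1 - z^W"] norm_triangle_ineq4[of 1 "z^W"]
      power_le_one[OF norm_ge_zero assms(1), of W]
    unfolding \<delta>_def by (simp add: norm_mult norm_power)
  finally show ?thesis
    using \<open>0 < \<delta>\<close> unfolding \<delta>_def[symmetric] by (simp add: field_simps power2_eq_square)
qed

locale stationary_markov_chain =
  fixes d :: nat and P :: "real mat" and \<pi> :: "nat \<Rightarrow> real"
  assumes stochastic: "stochastic_mat d P"
    and stationary: "stationary_dist d P \<pi>"
begin

lemma P_carrier: "P \<in> carrier_mat (d+1) (d+1)"
  using stochastic unfolding stochastic_mat_def by simp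

lemma P_nonneg: "a \<le> d \<Longrightarrow> b \<le> d \<Longrightarrow> 0 \<le> P $$ (a,b)"
  using stochastic unfolding stochastic_mat_def by simp

lemma P_row_sum: "a \<le> d \<Longrightarrow> (\<Sum>b\<le>d. P $$ (a,b)) = 1"
  using stochastic unfolding stochastic_mat_def by simp

lemma \<pi>_nonneg: "a \<le> d \<Longrightarrow> 0 \<le> \<pi> a"
  using stationary unfolding stationary_dist_def by simp

lemma \<pi>_sum: "(\<Sum>a\<le>d. \<pi> a) = 1"
  using stationary unfolding stationary_dist_def by simp

lemma \<pi>_P: "b \<le> d \<Longrightarrow> (\<Sum>a\<le>d. \<pi> a * P $$ (a,b)) = \<pi> b"
  using stationary unfolding stationary_dist_def by simp

lemma power_0_entry: "a \<le> d \<Longrightarrow> b \<le> d \<Longrightarrow> (P ^\<^sub>m 0) $$ (a,b) = (if a = b then 1 else 0)"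
  using P_carrier by simp

lemma power_Suc_entry:
  "a \<le> d \<Longrightarrow> b \<le> d \<Longrightarrow> (P ^\<^sub>m Suc k) $$ (a,b) = (\<Sum>c\<le>d. (P ^\<^sub>m k) $$ (a,c) * P $$ (c,b))"
  using P_carrier by (simp add: scalar_prod_def atLeast0LessThan lessThan_Suc_atMost)

lemma power_row_sum: "a \<le> d \<Longrightarrow> (\<Sum>b\<le>d. (P ^\<^sub>m k) $$ (a,b)) = 1"
proof (induction k)
  case 0
  then show ?case by (simp add: power_0_entry del: pow_mat.simps)
next
  case (Suc k)
  have "(\<Sum>b\<le>d. (P ^\<^sub>m Suc k) $$ (a,b)) = (\<Sum>c\<le>d. (P ^\<^sub>m k) $$ (a,c) * (\<Sum>b\<le>d. P $$ (c,b)))"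
    using Suc.prems by (simp add: power_Suc_entry sum_distrib_left del: pow_mat.simps, subst sum.swap, simp)
  then show ?case using Suc by (simp add: P_row_sum)
qed

lemma \<pi>_power: "b \<le> d \<Longrightarrow> (\<Sum>a\<le>d. \<pi> a * (P ^\<^sub>m k) $$ (a,b)) = \<pi> b"
proof (induction k arbitrary: b)
  case 0
  then show ?case by (simp add: power_0_entry if_distrib cong: if_cong del: pow_mat.simps)
next
  case (Suc k)
  have "(\<Sum>a\<le>d. \<pi> a * (P ^\<^sub>m Suc k) $$ (a,b)) = (\<Sum>c\<le>d. (\<Sum>a\<le>d. \<pi> a * (P ^\<^sub>m k) $$ (a,c)) * P $$ (c,b))"
    using Suc.prems
    by (simp add: power_Suc_entry sum_distrib_left sum_distrib_right mult.assoc del: pow_mat.simps,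
          subst sum.swap, simp)
  then show ?case using Suc by (simp add: \<pi>_P)
qed

lemma forward_weight_homogeneous:
  assumes "\<And>u a b. n \<le> u \<Longrightarrow> u < n + k \<Longrightarrow> M u a b = P $$ (a,b)" and "b \<le> d"
  shows "forward_weight d w M (n + k) b = (\<Sum>a\<le>d. forward_weight d w M n a * (P ^\<^sub>m k) $$ (a,b))"
  using assms
proof (induction k arbitrary: b)
  case 0
  then show ?case by (simp add: power_0_entry if_distrib cong: if_cong del: pow_mat.simps)
next
  case (Suc k)
  have "forward_weight d w M (n + Suc k) b
      = (\<Sum>c\<le>d. (\<Sum>a\<le>d. forward_weight d w M n a * (P ^\<^sub>m k) $$ (a,c)) * P $$ (c,b))"
    using Suc by simp
  also have "\<dots> = (\<Sum>a\<le>d. forward_weight d w M n a * (P ^\<^sub>m Suc k) $$ (a,b))"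
    using Suc.prems
    by (simp add: power_Suc_entry sum_distrib_left sum_distrib_right mult.assoc del: pow_mat.simps,
          subst sum.swap, simp)
  finally show ?case .
qed

lemma forward_weight_stationary:
  assumes "\<And>u a b. u < n \<Longrightarrow> M u a b = P $$ (a,b)" and "b \<le> d"
  shows "forward_weight d \<pi> M n b = \<pi> b"
  using forward_weight_homogeneous[of 0 n M b \<pi>] assms by (simp add: \<pi>_power)

lemma forward_weight_after_mark:
  assumes mark: "\<And>a b. M n a b = (if a = i \<and> b = j then c else 0)"
    and hom: "\<And>u a b. n < u \<Longrightarrow> u \<le> n + k \<Longrightarrow> M u a b = P $$ (a,b)"
    and "i \<le> d" "j \<le> d" "b \<le> d"
  shows "forward_weight d w M (Suc n + k) b = forward_weight d w M n i * c * (P ^\<^sub>m k) $$ (j,b)"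
proof -
  have "forward_weight d w M (Suc n) a = (if a = j then forward_weight d w M n i * c else 0)" for a
    using \<open>i \<le> d\<close> by (simp add: mark if_distrib[of "(*) _"] sum.delta cong: if_cong)
  then show ?thesis
    using forward_weight_homogeneous[of "Suc n" k M b w] hom assms(3-)
    by (simp add: if_distrib[of "\<lambda>x. x * _"] sum.delta cong: if_cong)
qed

lemma sum_forward_weight_after_mark:
  assumes "\<And>a b. M n a b = (if a = i \<and> b = j then c else 0)"
    and "\<And>u a b. n < u \<Longrightarrow> u \<le> n + k \<Longrightarrow> M u a b = P $$ (a,b)"
    and "i \<le> d" "j \<le> d"
  shows "(\<Sum>b\<le>d. forward_weight d w M (Suc n + k) b) = forward_weight d w M n i * c"
  using forward_weight_after_mark[where M = M and n = n, OF assms] power_row_sum[OF \<open>j \<le> d\<close>]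
  by (simp add: sum_distrib_left[symmetric])


lemma expect_transition_pair_less:
  assumes "s < t" "t < W" "i \<le> d" "j \<le> d" "j' \<le> d"
  shows "mc_expect d P \<pi> W (\<lambda>y. transition_at s i j y * transition_at t i j' y)
    = \<pi> i * P $$ (i,j) * (P ^\<^sub>m (t - s - 1)) $$ (j,i) * P $$ (i,j')"
proof -
  let ?M = "\<lambda>u a b. P $$ (a,b)
    * (if u = s then if a = i \<and> b = j then 1 else 0 else 1)
    * (if u = t then if a = i \<and> b = j' then 1 else 0 else 1)"
  have "forward_weight d \<pi> ?M s i = \<pi> i"
    by (rule forward_weight_stationary) (use assms in auto)
  then have "forward_weight d \<pi> ?M (Suc s + (t - s - 1)) i
      = \<pi> i * P $$ (i,j) * (P ^\<^sub>m (t - s - 1)) $$ (j,i)"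
    by (subst forward_weight_after_mark[where i = i and j = j and c = "P $$ (i,j)"])
      (use assms in auto)
  moreover have "(\<Sum>b\<le>d. forward_weight d \<pi> ?M (Suc t + (W - Suc t)) b)
      = forward_weight d \<pi> ?M t i * P $$ (i,j')"
    by (rule sum_forward_weight_after_mark[where j = j']) (use assms in auto)
  ultimately show ?thesis
    using assms by (simp add: mc_expect_transition_pair)
qed

lemma expect_transition_pair_same:
  assumes "s < W" "i \<le> d" "j \<le> d" "j' \<le> d"
  shows "mc_expect d P \<pi> W (\<lambda>y. transition_at s i j y * transition_at s i j' y)
    = (if j = j' then \<pi> i * P $$ (i,j) else 0)"
proof -
  let ?M = "\<lambda>u a b. P $$ (a,b)
    * (if u = s then if a = i \<and> b = j then 1 else 0 else 1)
    * (if u = s then if a = i \<and> b = j' then 1 else 0 else 1)"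
  have "forward_weight d \<pi> ?M s i = \<pi> i"
    by (rule forward_weight_stationary) (use assms in auto)
  moreover have "(\<Sum>b\<le>d. forward_weight d \<pi> ?M (Suc s + (W - Suc s)) b)
      = forward_weight d \<pi> ?M s i * (if j = j' then P $$ (i,j) else 0)"
    by (rule sum_forward_weight_after_mark[where j = j]) (use assms in auto)
  ultimately show ?thesis
    using assms by (simp add: mc_expect_transition_pair)
qed


lemma expect_transition_at:
  assumes "s < W" "i \<le> d" "j \<le> d"
  shows "mc_expect d P \<pi> W (transition_at s i j) = \<pi> i * P $$ (i,j)"
proof -
  have "(\<lambda>y. transition_at s i j y * transition_at s i j y) = transition_at s i j"
    by (simp add: transition_at_def fun_eq_iff)
  then show ?thesis
    using expect_transition_pair_same[OF assms assms(3)] by simp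
qed

lemma cov_transition_pair:
  assumes "s < W" "t < W" "i \<le> d" "j \<le> d" "j' \<le> d"
  shows "mc_cov d P \<pi> W (transition_at s i j) (transition_at t i j')
    = (if s = t then (if j = j' then \<pi> i * P $$ (i,j) else 0) - \<pi> i * P $$ (i,j) * (\<pi> i * P $$ (i,j'))
       else if s < t then \<pi> i * P $$ (i,j) * P $$ (i,j') * ((P ^\<^sub>m (t - s - 1)) $$ (j,i) - \<pi> i)
       else \<pi> i * P $$ (i,j) * P $$ (i,j') * ((P ^\<^sub>m (s - t - 1)) $$ (j',i) - \<pi> i))"
proof -
  consider "s = t" | "s < t" | "t < s" by linarith
  then have "mc_expect d P \<pi> W (\<lambda>y. transition_at s i j y * transition_at t i j' y)
    = (if s = t then if j = j' then \<pi> i * P $$ (i,j) else 0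
       else if s < t then \<pi> i * P $$ (i,j) * (P ^\<^sub>m (t - s - 1)) $$ (j,i) * P $$ (i,j')
       else \<pi> i * P $$ (i,j') * (P ^\<^sub>m (s - t - 1)) $$ (j',i) * P $$ (i,j))"
  proof cases
    case 3
    then show ?thesis
      using expect_transition_pair_less[of t s W i j' j] assms by (simp add: mult.commute)
  qed (use assms expect_transition_pair_same expect_transition_pair_less in auto)
  then show ?thesis
    unfolding mc_cov_def using assms by (simp add: expect_transition_at algebra_simps)
qed

definition power_deviation_sum :: "nat \<Rightarrow> nat \<Rightarrow> nat \<Rightarrow> real" where
  "power_deviation_sum W j i = (\<Sum>t<W. \<Sum>m<t. (P ^\<^sub>m m) $$ (j,i) - \<pi> i)"

lemma cov_trans_count:
  assumes "i \<le> d" "j \<le> d" "j' \<le> d"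
  shows "mc_cov d P \<pi> W (trans_count W i j) (trans_count W i j')
    = real W * ((if j = j' then \<pi> i * P $$ (i,j) else 0) - \<pi> i * P $$ (i,j) * (\<pi> i * P $$ (i,j')))
      + \<pi> i * P $$ (i,j) * P $$ (i,j') * (power_deviation_sum W j i + power_deviation_sum W j' i)"
proof -
  have "mc_cov d P \<pi> W (trans_count W i j) (trans_count W i j')
      = (\<Sum>s<W. \<Sum>t<W. mc_cov d P \<pi> W (transition_at s i j) (transition_at t i j'))"
    unfolding trans_count_eq_sum[abs_def] by (rule mc_cov_sum)
  also have "\<dots> = real W * ((if j = j' then \<pi> i * P $$ (i,j) else 0) - \<pi> i * P $$ (i,j) * (\<pi> i * P $$ (i,j')))
      + (\<Sum>t<W. \<Sum>m<t. \<pi> i * P $$ (i,j) * P $$ (i,j') * ((P ^\<^sub>m m) $$ (j,i) - \<pi> i)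
                     + \<pi> i * P $$ (i,j) * P $$ (i,j') * ((P ^\<^sub>m m) $$ (j',i) - \<pi> i))"
    by (rule sum_square_by_offset) (use assms cov_transition_pair in presburger)
  finally show ?thesis
    unfolding power_deviation_sum_def by (simp add: sum.distrib sum_distrib_left distrib_left)
qed


lemma norm_right_eigenvalue_le_1:
  fixes u :: "nat \<Rightarrow> complex"
  assumes eigen: "\<And>a. a \<le> d \<Longrightarrow> (\<Sum>b\<le>d. of_real (P $$ (a,b)) * u b) = \<mu> * u a"
    and nonzero: "a1 \<le> d" "u a1 \<noteq> 0"
  shows "cmod \<mu> \<le> 1"
proof -
  define m where "m = Max ((\<lambda>a. cmod (u a)) ` {..d})"
  have m_ge: "cmod (u a) \<le> m" if "a \<le> d" for a
    unfolding m_def using that by (intro Max_ge) auto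
  have "m \<in> (\<lambda>a. cmod (u a)) ` {..d}"
    unfolding m_def by (intro Max_in) auto
  then obtain a0 where a0: "a0 \<le> d" "cmod (u a0) = m" by auto
  have "0 < m" using m_ge[OF nonzero(1)] nonzero(2) zero_less_norm_iff[of "u a1"] by linarith
  have "m * cmod \<mu> = cmod (\<Sum>b\<le>d. of_real (P $$ (a0,b)) * u b)"
    using eigen[OF a0(1)] a0(2) by (simp add: norm_mult)
  also have "\<dots> \<le> (\<Sum>b\<le>d. P $$ (a0,b) * m)"
  proof (rule order_trans[OF norm_sum sum_mono])
    fix b assume "b \<in> {..d}"
    then show "cmod (of_real (P $$ (a0,b)) * u b) \<le> P $$ (a0,b) * m"
      using P_nonneg[OF a0(1)] m_ge by (simp add: norm_mult mult_left_mono)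
  qed
  also have "\<dots> = m" using P_row_sum[OF a0(1)] by (simp add: sum_distrib_right[symmetric])
  finally show ?thesis using \<open>0 < m\<close> by (simp add: mult_le_cancel_left1)
qed

end

locale diagonalized_markov_chain = stationary_markov_chain +
  fixes U V :: "complex mat" and lam :: "nat \<Rightarrow> complex"
  assumes U_carrier: "U \<in> carrier_mat (d+1) (d+1)" and V_carrier: "V \<in> carrier_mat (d+1) (d+1)"
    and U_V: "U * V = 1\<^sub>m (d+1)" and V_U: "V * U = 1\<^sub>m (d+1)"
    and decomp: "map_mat complex_of_real P = U * diag_cmat (d+1) lam * V"
    and simple: "inj_on lam {0..d}"
    and lam_0: "lam 0 = 1"
begin

lemma diag_carrier: "diag_cmat (d+1) lam \<in> carrier_mat (d+1) (d+1)"
  by (simp add: diag_cmat_def)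

lemma P_U: "map_mat complex_of_real P * U = U * diag_cmat (d+1) lam"
proof -
  note UD = mult_carrier_mat[OF U_carrier diag_carrier]
  have "map_mat complex_of_real P * U = (U * diag_cmat (d+1) lam * V) * U"
    by (simp only: decomp)
  also have "\<dots> = (U * diag_cmat (d+1) lam) * (V * U)"
    by (rule assoc_mult_mat[OF UD V_carrier U_carrier])
  finally show ?thesis by (simp only: V_U right_mult_one_mat[OF UD])
qed

lemma V_P: "V * map_mat complex_of_real P = diag_cmat (d+1) lam * V"
proof -
  note DV = mult_carrier_mat[OF diag_carrier V_carrier]
  have "V * map_mat complex_of_real P = V * (U * (diag_cmat (d+1) lam * V))"
    by (simp only: decomp assoc_mult_mat[OF U_carrier diag_carrier V_carrier])
  also have "\<dots> = (V * U) * (diag_cmat (d+1) lam * V)"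
    by (rule assoc_mult_mat[symmetric, OF V_carrier U_carrier DV])
  finally show ?thesis by (simp only: V_U left_mult_one_mat[OF DV])
qed

lemma right_eigenvector:
  "a \<le> d \<Longrightarrow> r \<le> d \<Longrightarrow> (\<Sum>b\<le>d. of_real (P $$ (a,b)) * U $$ (b,r)) = lam r * U $$ (a,r)"
  using arg_cong[OF P_U, of "\<lambda>A. A $$ (a,r)"] P_carrier U_carrier
  by (simp add: scalar_prod_def diag_cmat_def atLeast0LessThan lessThan_Suc_atMost
      if_distrib[of "\<lambda>x. _ * x"] sum.delta mult.commute cong: if_cong)

lemma left_eigenvector:
  "r \<le> d \<Longrightarrow> b \<le> d \<Longrightarrow> (\<Sum>a\<le>d. V $$ (r,a) * of_real (P $$ (a,b))) = lam r * V $$ (r,b)"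
  using arg_cong[OF V_P, of "\<lambda>A. A $$ (r,b)"] P_carrier V_carrier
  by (simp add: scalar_prod_def diag_cmat_def atLeast0LessThan lessThan_Suc_atMost
      if_distrib[of "\<lambda>x. x * _"] sum.delta cong: if_cong)

lemma U_V_entry: "a \<le> d \<Longrightarrow> b \<le> d \<Longrightarrow> (\<Sum>r\<le>d. U $$ (a,r) * V $$ (r,b)) = (if a = b then 1 else 0)"
  using arg_cong[OF U_V, of "\<lambda>A. A $$ (a,b)"] U_carrier V_carrier
  by (simp add: scalar_prod_def atLeast0LessThan lessThan_Suc_atMost)

lemma V_U_entry: "r \<le> d \<Longrightarrow> s \<le> d \<Longrightarrow> (\<Sum>a\<le>d. V $$ (r,a) * U $$ (a,s)) = (if r = s then 1 else 0)"
  using arg_cong[OF V_U, of "\<lambda>A. A $$ (r,s)"] U_carrier V_carrier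
  by (simp add: scalar_prod_def atLeast0LessThan lessThan_Suc_atMost)

lemma power_entry_spectral:
  assumes "a \<le> d" "b \<le> d"
  shows "of_real ((P ^\<^sub>m k) $$ (a,b)) = (\<Sum>r\<le>d. U $$ (a,r) * lam r ^ k * V $$ (r,b))"
  using assms(2)
proof (induction k arbitrary: b)
  case 0
  then show ?case using assms(1) by (simp add: power_0_entry U_V_entry del: pow_mat.simps)
next
  case (Suc k)
  have "complex_of_real ((P ^\<^sub>m Suc k) $$ (a,b))
      = (\<Sum>c\<le>d. (\<Sum>r\<le>d. U $$ (a,r) * lam r ^ k * V $$ (r,c)) * of_real (P $$ (c,b)))"
    using assms(1) Suc by (simp add: power_Suc_entry del: pow_mat.simps)
  also have "\<dots> = (\<Sum>r\<le>d. U $$ (a,r) * lam r ^ k * (\<Sum>c\<le>d. V $$ (r,c) * of_real (P $$ (c,b))))"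
    by (simp add: sum_distrib_left sum_distrib_right mult.assoc, subst sum.swap, simp)
  also have "\<dots> = (\<Sum>r\<le>d. U $$ (a,r) * lam r ^ Suc k * V $$ (r,b))"
    using Suc.prems by (intro sum.cong) (simp_all add: left_eigenvector)
  finally show ?case .
qed

lemma lam_ne_1: "r \<le> d \<Longrightarrow> r \<noteq> 0 \<Longrightarrow> lam r \<noteq> 1"
  using simple lam_0 unfolding inj_on_def by (metis atLeastAtMost_iff le0)

lemma norm_lam_le_1: "r \<le> d \<Longrightarrow> cmod (lam r) \<le> 1"
proof -
  assume r: "r \<le> d"
  obtain a1 where "a1 \<le> d" "U $$ (a1,r) \<noteq> 0"
    using V_U_entry[OF r r] by (metis (no_types, lifting) mult_zero_right one_neq_zero sum.neutral atMost_iff)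
  then show ?thesis
    using r by (intro norm_right_eigenvalue_le_1[of "\<lambda>b. U $$ (b,r)"]) (simp_all add: right_eigenvector)
qed

lemma left_fixed_vector:
  assumes fixed: "\<And>b. b \<le> d \<Longrightarrow> (\<Sum>a\<le>d. x a * of_real (P $$ (a,b))) = x b" and "b \<le> d"
  shows "x b = (\<Sum>a\<le>d. x a * U $$ (a,0)) * V $$ (0,b)"
proof -
  define \<alpha> where "\<alpha> r = (\<Sum>a\<le>d. x a * U $$ (a,r))" for r
  have "\<alpha> r = 0" if "r \<le> d" "r \<noteq> 0" for r
  proof -
    have "\<alpha> r * lam r = (\<Sum>a\<le>d. x a * (lam r * U $$ (a,r)))"
      unfolding \<alpha>_def sum_distrib_right by (simp add: mult_ac)
    also have "\<dots> = (\<Sum>a\<le>d. x a * (\<Sum>b\<le>d. of_real (P $$ (a,b)) * U $$ (b,r)))"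
      using that by (simp add: right_eigenvector)
    also have "\<dots> = (\<Sum>b\<le>d. (\<Sum>a\<le>d. x a * of_real (P $$ (a,b))) * U $$ (b,r))"
      by (simp add: sum_distrib_left sum_distrib_right mult.assoc, subst sum.swap, simp)
    also have "\<dots> = \<alpha> r" unfolding \<alpha>_def by (simp add: fixed)
    finally show ?thesis using lam_ne_1[OF that] by (simp add: algebra_simps)
  qed
  then have "(\<Sum>r\<le>d. \<alpha> r * V $$ (r,b)) = \<alpha> 0 * V $$ (0,b)"
    by (subst sum.mono_neutral_right[of "{..d}" "{0}"]) auto
  moreover have "x b = (\<Sum>r\<le>d. \<alpha> r * V $$ (r,b))"
    unfolding \<alpha>_def using \<open>b \<le> d\<close>
    by (simp add: sum_distrib_right mult.assoc U_V_entry, subst sum.swap)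
       (simp add: sum_distrib_left[symmetric] U_V_entry if_distrib[of "\<lambda>y. _ * y"] sum.delta cong: if_cong)
  ultimately show ?thesis unfolding \<alpha>_def by simp
qed

lemma right_fixed_vector:
  assumes fixed: "\<And>a. a \<le> d \<Longrightarrow> (\<Sum>b\<le>d. of_real (P $$ (a,b)) * x b) = x a" and "a \<le> d"
  shows "x a = U $$ (a,0) * (\<Sum>b\<le>d. V $$ (0,b) * x b)"
proof -
  define \<beta> where "\<beta> r = (\<Sum>b\<le>d. V $$ (r,b) * x b)" for r
  have "\<beta> r = 0" if "r \<le> d" "r \<noteq> 0" for r
  proof -
    have "lam r * \<beta> r = (\<Sum>b\<le>d. (lam r * V $$ (r,b)) * x b)"
      unfolding \<beta>_def sum_distrib_left by (simp add: mult_ac)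
    also have "\<dots> = (\<Sum>b\<le>d. (\<Sum>a\<le>d. V $$ (r,a) * of_real (P $$ (a,b))) * x b)"
      using that by (simp add: left_eigenvector)
    also have "\<dots> = (\<Sum>a\<le>d. V $$ (r,a) * (\<Sum>b\<le>d. of_real (P $$ (a,b)) * x b))"
      by (simp add: sum_distrib_left sum_distrib_right mult.assoc, subst sum.swap, simp)
    also have "\<dots> = \<beta> r" unfolding \<beta>_def by (simp add: fixed)
    finally show ?thesis using lam_ne_1[OF that] by (simp add: algebra_simps)
  qed
  then have "(\<Sum>r\<le>d. U $$ (a,r) * \<beta> r) = U $$ (a,0) * \<beta> 0"
    by (subst sum.mono_neutral_right[of "{..d}" "{0}"]) auto
  moreover have "x a = (\<Sum>r\<le>d. U $$ (a,r) * \<beta> r)"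
    unfolding \<beta>_def using \<open>a \<le> d\<close>
    by (simp add: sum_distrib_left mult.assoc[symmetric], subst sum.swap)
       (simp add: sum_distrib_right[symmetric] U_V_entry if_distrib[of "\<lambda>y. y * _"] sum.delta cong: if_cong)
  ultimately show ?thesis unfolding \<beta>_def by simp
qed

text \<open>Both \<open>\<pi>\<close> and the constant vector \<open>1\<close> are fixed by \<open>P\<close>; as the eigenvalue \<open>1\<close> is simple,
  they are multiples of row \<open>0\<close> of \<open>V\<close> and of column \<open>0\<close> of \<open>U\<close>, and \<open>V U = 1\<close> fixes the scale.\<close>

lemma stationary_projection:
  assumes "a \<le> d" "b \<le> d"
  shows "U $$ (a,0) * V $$ (0,b) = of_real (\<pi> b)"
proof -
  define \<alpha> where "\<alpha> = (\<Sum>a\<le>d. of_real (\<pi> a) * U $$ (a,0))"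
  define \<beta> where "\<beta> = (\<Sum>b\<le>d. V $$ (0,b))"
  have \<pi>_eq: "of_real (\<pi> b) = \<alpha> * V $$ (0,b)" if "b \<le> d" for b
    unfolding \<alpha>_def using that
    by (intro left_fixed_vector) (simp_all flip: of_real_mult of_real_sum add: \<pi>_P)
  have one_eq: "1 = U $$ (a,0) * \<beta>" if "a \<le> d" for a
  proof -
    have "(1::complex) = U $$ (a,0) * (\<Sum>b\<le>d. V $$ (0,b) * 1)"
      using that by (intro right_fixed_vector) (simp_all flip: of_real_sum add: P_row_sum)
    then show ?thesis unfolding \<beta>_def by simp
  qed
  have "\<alpha> * \<beta> = (\<Sum>a\<le>d. of_real (\<pi> a) * (U $$ (a,0) * \<beta>))"
    unfolding \<alpha>_def by (simp add: sum_distrib_right mult.assoc)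
  also have "\<dots> = 1"
    using one_eq by (simp flip: of_real_sum add: \<pi>_sum)
  finally have "\<alpha> * \<beta> = 1" .
  then have "U $$ (a,0) * V $$ (0,b) = (U $$ (a,0) * \<beta>) * (\<alpha> * V $$ (0,b))"
    by (simp add: algebra_simps)
  then show ?thesis using one_eq[OF assms(1)] \<pi>_eq[OF assms(2)] by simp
qed

lemma power_deviation_spectral:
  assumes "j \<le> d" "i \<le> d"
  shows "of_real ((P ^\<^sub>m k) $$ (j,i) - \<pi> i) = (\<Sum>r=1..d. U $$ (j,r) * V $$ (r,i) * lam r ^ k)"
proof -
  have "complex_of_real ((P ^\<^sub>m k) $$ (j,i)) = (\<Sum>r=0..d. U $$ (j,r) * lam r ^ k * V $$ (r,i))"
    using power_entry_spectral[OF assms] by (simp add: atLeast0AtMost)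
  also have "\<dots> = U $$ (j,0) * V $$ (0,i) + (\<Sum>r=1..d. U $$ (j,r) * V $$ (r,i) * lam r ^ k)"
    by (subst sum.atLeast_Suc_atMost) (simp_all add: lam_0 mult_ac)
  finally show ?thesis
    using stationary_projection[OF assms] by simp
qed

definition spectral_weight :: "nat \<Rightarrow> nat \<Rightarrow> real" where
  "spectral_weight j i = (\<Sum>r=1..d. cmod (U $$ (j,r) * V $$ (r,i)))"

lemma power_deviation_sum_le:
  assumes "j \<le> d" "i \<le> d" "1 \<le> d"
    and gap: "\<forall>r\<in>{1..d}. cmod (1 - lam 1) \<le> cmod (1 - lam r)"
  shows "power_deviation_sum W j i
    \<le> spectral_weight j i * (2 / cmod (1 - lam 1)^2 + W / cmod (1 - lam 1))"
proof -
  define K where "K = 2 / cmod (1 - lam 1)^2 + W / cmod (1 - lam 1)"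
  define g where "g r = U $$ (j,r) * V $$ (r,i)" for r
  have "0 < cmod (1 - lam 1)" using lam_ne_1[of 1] \<open>1 \<le> d\<close> by simp
  have "of_real (power_deviation_sum W j i) = (\<Sum>t<W. \<Sum>m<t. \<Sum>r=1..d. g r * lam r ^ m)"
    unfolding power_deviation_sum_def g_def using power_deviation_spectral[OF assms(1,2)] by simp
  also have "\<dots> = (\<Sum>r=1..d. g r * (\<Sum>t<W. \<Sum>m<t. lam r ^ m))"
    by (simp add: sum_distrib_left, subst (2) sum.swap, subst sum.swap, simp)
  finally have "power_deviation_sum W j i \<le> cmod (\<Sum>r=1..d. g r * (\<Sum>t<W. \<Sum>m<t. lam r ^ m))"
    by (metis abs_ge_self norm_of_real)
  also have "\<dots> \<le> (\<Sum>r=1..d. cmod (g r) * K)"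
  proof (rule order_trans[OF norm_sum sum_mono])
    fix r assume r: "r \<in> {1..d}"
    have "cmod (\<Sum>t<W. \<Sum>m<t. lam r ^ m) \<le> 2 / cmod (1 - lam r)^2 + W / cmod (1 - lam r)"
      using r lam_ne_1[of r] norm_lam_le_1[of r] by (intro norm_sum_partial_geometric_sums_le) auto
    also have "\<dots> \<le> K"
      unfolding K_def using r gap lam_ne_1[of r] \<open>0 < cmod (1 - lam 1)\<close>
      by (intro add_mono divide_left_mono power_mono mult_pos_pos) auto
    finally show "cmod (g r * (\<Sum>t<W. \<Sum>m<t. lam r ^ m)) \<le> cmod (g r) * K"
      by (simp add: norm_mult mult_left_mono)
  qed
  finally show ?thesis
    unfolding spectral_weight_def g_def K_def by (simp add: sum_distrib_right)
qed

lemma cov_trans_frequency_le: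
  assumes "1 \<le> d" "1 \<le> W"
    and gap: "\<forall>r\<in>{1..d}. cmod (1 - lam 1) \<le> cmod (1 - lam r)"
    and "i \<le> d" "j \<le> d" "j' \<le> d"
  shows "mc_cov d P \<pi> W (\<lambda>y. trans_count W i j y / W) (\<lambda>y. trans_count W i j' y / W)
    \<le> ((if j = j' then \<pi> i * P $$ (i,j) else 0) - \<pi> i * P $$ (i,j) * (\<pi> i * P $$ (i,j'))) / W
      + \<pi> i * P $$ (i,j) * P $$ (i,j') * (spectral_weight j i + spectral_weight j' i)
        * (2 + W * cmod (1 - lam 1)) / (W^2 * cmod (1 - lam 1)^2)"
proof -
  define \<delta> where "\<delta> = cmod (1 - lam 1)"
  define A where "A = (if j = j' then \<pi> i * P $$ (i,j) else 0) - \<pi> i * P $$ (i,j) * (\<pi> i * P $$ (i,j'))"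
  define w where "w = \<pi> i * P $$ (i,j) * P $$ (i,j')"
  have "0 < \<delta>" using lam_ne_1[of 1] \<open>1 \<le> d\<close> unfolding \<delta>_def by simp
  have "0 \<le> w" unfolding w_def using assms(4-) by (simp add: \<pi>_nonneg P_nonneg)
  have "power_deviation_sum W j i + power_deviation_sum W j' i
      \<le> (spectral_weight j i + spectral_weight j' i) * (2 / \<delta>^2 + W / \<delta>)"
    using add_mono[OF power_deviation_sum_le[OF assms(5,4,1) gap] power_deviation_sum_le[OF assms(6,4,1) gap]]
    unfolding \<delta>_def by (simp add: distrib_right)
  then have "(W * A + w * (power_deviation_sum W j i + power_deviation_sum W j' i)) / W^2
      \<le> (W * A + w * ((spectral_weight j i + spectral_weight j' i) * (2 / \<delta>^2 + W / \<delta>))) / W^2"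
    using \<open>0 \<le> w\<close> by (intro divide_right_mono add_left_mono mult_left_mono) auto
  also have "\<dots> = A / W + w * (spectral_weight j i + spectral_weight j' i)
      * (2 + W * \<delta>) / (W^2 * \<delta>^2)"
    using \<open>0 < \<delta>\<close> \<open>1 \<le> W\<close> by (simp add: field_simps power2_eq_square)
  finally show ?thesis
    unfolding mc_cov_divide cov_trans_count[OF assms(4-)] A_def w_def \<delta>_def by simp
qed

end

theorem lemma1:
  fixes d W :: nat and P :: "real mat" and \<pi> :: "nat \<Rightarrow> real"
    and U V :: "complex mat" and lam :: "nat \<Rightarrow> complex"
  assumes d: "d \<ge> 1" and W: "W \<ge> 1"
    and erg: "ergodic_mc d P"
    and stat: "stationary_dist d P \<pi>"
    and U: "U \<in> carrier_mat (d+1) (d+1)" and V: "V \<in> carrier_mat (d+1) (d+1)"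
    and UV: "U * V = 1\<^sub>m (d+1)" and VU: "V * U = 1\<^sub>m (d+1)"
    and decomp: "map_mat complex_of_real P = U * diag_cmat (d+1) lam * V"
    and simple: "inj_on lam {0..d}"
    and lam0: "lam 0 = 1"
    and order: "\<forall>r\<in>{1..d}. cmod (1 - lam 1) \<le> cmod (1 - lam r)"
  defines "c \<equiv> (\<lambda>j i. \<Sum>r=1..d. cmod (U $$ (j,r) * V $$ (r,i)))"
  shows "(\<forall>i\<le>d. \<forall>j\<le>d.
            mc_var d P \<pi> W (\<lambda>y. trans_count W i j y / W)
            \<le> \<pi> i * P $$ (i,j) * ((1 - \<pi> i * P $$ (i,j)) / W
               + 2 * P $$ (i,j) * c j i * (2 + W * cmod (1 - lam 1)) / (W^2 * cmod (1 - lam 1)^2)))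
       \<and> (\<forall>i\<le>d. \<forall>j\<le>d. \<forall>j'\<le>d. j \<noteq> j' \<longrightarrow>
            mc_cov d P \<pi> W (\<lambda>y. trans_count W i j y / W) (\<lambda>y. trans_count W i j' y / W)
            \<le> \<pi> i * P $$ (i,j) * P $$ (i,j') * (- \<pi> i / W
               + (c j i + c j' i) * (2 + W * cmod (1 - lam 1)) / (W^2 * cmod (1 - lam 1)^2)))"
proof -
  \<comment> \<open>Of ergodicity only stochasticity is used: simplicity of the eigenvalue \<open>1\<close> and the
    ordering of the eigenvalues take over the role of irreducibility and aperiodicity.\<close>
  interpret diagonalized_markov_chain d P \<pi> U V lam
    using erg stat U V UV VU decomp simple lam0
    by unfold_locales (simp_all add: ergodic_mc_def)
  have c: "c = spectral_weight" unfolding c_def spectral_weight_def by (simp add: fun_eq_iff)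
  show ?thesis
  proof (intro conjI allI impI)
    fix i j assume "i \<le> d" "j \<le> d"
    then show "mc_var d P \<pi> W (\<lambda>y. trans_count W i j y / W)
        \<le> \<pi> i * P $$ (i,j) * ((1 - \<pi> i * P $$ (i,j)) / W
           + 2 * P $$ (i,j) * c j i * (2 + W * cmod (1 - lam 1)) / (W^2 * cmod (1 - lam 1)^2))"
      using cov_trans_frequency_le[OF d W order, of i j j]
      unfolding mc_var_def c by (simp add: algebra_simps diff_divide_distrib)
  next
    fix i j j' assume "i \<le> d" "j \<le> d" "j' \<le> d" "j \<noteq> j'"
    then show "mc_cov d P \<pi> W (\<lambda>y. trans_count W i j y / W) (\<lambda>y. trans_count W i j' y / W)
        \<le> \<pi> i * P $$ (i,j) * P $$ (i,j') * (- \<pi> i / W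
           + (c j i + c j' i) * (2 + W * cmod (1 - lam 1)) / (W^2 * cmod (1 - lam 1)^2))"
      using cov_trans_frequency_le[OF d W order, of i j j']
      unfolding c by (simp add: algebra_simps diff_divide_distrib)
  qed
qed

end
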